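(* Let $V$ be a finite nonempty set and $f:\{0,1\}^V\to\{0,1\}^V$. (1) $f$ is positive-circular if and only if $f$ is 2-critical and non-expansive. (2) $f$ is negative-circular if and only if $f$ is 0-critical and non-expansive.
   Context: For $x,y\in\{0,1\}^V$, $d(x,y)$ is the Hamming distance; $f$ is non-expansive if $d(f(x),f(y))\le d(x,y)$ for all $x,y$. For nonempty $I\subseteq V$ and $z\in\{0,1\}^{V\setminus I}$, the subnetwork of $f$ induced by $z$ is $h:\{0,1\}^I\to\{0,1\}^I$ with $h(x|_I)=f(x)|_I$ for all $x$ whose restriction to $V\setminus I$ is $z$; a strict subnetwork is a subnetwork different from $f$. $f$ is 2-critical if $f$ has at least two fixed points and every strict subnetwork of $f$ has at most one fixed point; $f$ is 0-critical if $f$ has no fixed point and every strict subnetwork of $f$ has at least one fixed point. For $x^{j\alpha}$ the point equal to $x$ except its $j$-component is $\alpha$, the global interaction graph $G(f)$ is the signed digraph on $V$ with a positive (resp. negative) arc from $j$ to $i$ iff $f_i(x^{j1})-f_i(x^{j0})=1$ (resp. $=-1$) for at least one $x$. A cycle is a subgraph with at most one arc between any ordered pair of vertices whose underlying unsigned digraph is a directed cycle; positive (negative) if it has an even (odd) number of negative arcs. $f$ is positive-circular (negative-circular) if $G(f)$ itself is a positive (negative) cycle through all vertices of $V$. *)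

theory Defs
  imports Main
begin

text \<open>Boolean networks on a finite nonempty vertex type 'v.
  A configuration x in {0,1}^V is a function 'v => bool (True = 1).\<close>

type_synonym 'v config = "'v \<Rightarrow> bool"

definition hamming :: "('v::finite) config \<Rightarrow> 'v config \<Rightarrow> nat" where
  "hamming x y = card {v. x v \<noteq> y v}"

definition non_expansive :: "(('v::finite) config \<Rightarrow> 'v config) \<Rightarrow> bool" where
  "non_expansive f \<longleftrightarrow> (\<forall>x y. hamming (f x) (f y) \<le> hamming x y)"

text \<open>Configurations on a subset I of V, represented extensionally
  (value False outside I).\<close>
definition confs_on :: "'v set \<Rightarrow> 'v config set" where
  "confs_on I = {x. \<forall>v. v \<notin> I \<longrightarrow> x v = False}"

definition glue :: "'v set \<Rightarrow> 'v config \<Rightarrow> 'v config \<Rightarrow> 'v config" where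
  "glue I x z = (\<lambda>v. if v \<in> I then x v else z v)"

text \<open>The subnetwork of f on I induced by z (z a configuration on V - I):
  h(x|I) = f(x)|I for x extending z.\<close>
definition subnet :: "('v config \<Rightarrow> 'v config) \<Rightarrow> 'v set \<Rightarrow> 'v config \<Rightarrow> 'v config \<Rightarrow> 'v config" where
  "subnet f I z = (\<lambda>x. \<lambda>v. if v \<in> I then f (glue I x z) v else False)"

definition sub_fixpoints :: "('v config \<Rightarrow> 'v config) \<Rightarrow> 'v set \<Rightarrow> 'v config \<Rightarrow> 'v config set" where
  "sub_fixpoints f I z = {x \<in> confs_on I. subnet f I z x = x}"

definition fixpoints :: "('v config \<Rightarrow> 'v config) \<Rightarrow> 'v config set" where
  "fixpoints f = {x. f x = x}"

text \<open>Strict subnetworks are exactly those with nonempty I different from V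
  (for I = V the subnetwork is f itself; for I a proper subset the domain differs).\<close>
definition two_critical :: "(('v::finite) config \<Rightarrow> 'v config) \<Rightarrow> bool" where
  "two_critical f \<longleftrightarrow> card (fixpoints f) \<ge> 2 \<and>
     (\<forall>I z. I \<noteq> {} \<and> I \<noteq> UNIV \<and> z \<in> confs_on (- I) \<longrightarrow> card (sub_fixpoints f I z) \<le> 1)"

definition zero_critical :: "(('v::finite) config \<Rightarrow> 'v config) \<Rightarrow> bool" where
  "zero_critical f \<longleftrightarrow> fixpoints f = {} \<and>
     (\<forall>I z. I \<noteq> {} \<and> I \<noteq> UNIV \<and> z \<in> confs_on (- I) \<longrightarrow> sub_fixpoints f I z \<noteq> {})"

definition pos_arc :: "('v config \<Rightarrow> 'v config) \<Rightarrow> 'v \<Rightarrow> 'v \<Rightarrow> bool" where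
  "pos_arc f j i \<longleftrightarrow> (\<exists>x. f (x(j := True)) i \<and> \<not> f (x(j := False)) i)"

definition neg_arc :: "('v config \<Rightarrow> 'v config) \<Rightarrow> 'v \<Rightarrow> 'v \<Rightarrow> bool" where
  "neg_arc f j i \<longleftrightarrow> (\<exists>x. \<not> f (x(j := True)) i \<and> f (x(j := False)) i)"

definition arcs :: "('v config \<Rightarrow> 'v config) \<Rightarrow> ('v \<times> 'v) set" where
  "arcs f = {(j, i). pos_arc f j i \<or> neg_arc f j i}"

definition hamiltonian_cycle :: "(('v::finite) \<times> 'v) set \<Rightarrow> bool" where
  "hamiltonian_cycle E \<longleftrightarrow> (\<exists>\<sigma> :: nat \<Rightarrow> 'v. bij_betw \<sigma> {..<card (UNIV :: 'v set)} UNIV \<and>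
      E = {(\<sigma> k, \<sigma> (Suc k mod card (UNIV :: 'v set))) | k. k < card (UNIV :: 'v set)})"

definition Gf_full_cycle :: "(('v::finite) config \<Rightarrow> 'v config) \<Rightarrow> bool" where
  "Gf_full_cycle f \<longleftrightarrow> (\<forall>j i. \<not> (pos_arc f j i \<and> neg_arc f j i)) \<and> hamiltonian_cycle (arcs f)"

definition num_neg_arcs :: "(('v::finite) config \<Rightarrow> 'v config) \<Rightarrow> nat" where
  "num_neg_arcs f = card {(j, i). neg_arc f j i}"

definition positive_circular :: "(('v::finite) config \<Rightarrow> 'v config) \<Rightarrow> bool" where
  "positive_circular f \<longleftrightarrow> Gf_full_cycle f \<and> even (num_neg_arcs f)"

definition negative_circular :: "(('v::finite) config \<Rightarrow> 'v config) \<Rightarrow> bool" where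
  "negative_circular f \<longleftrightarrow> Gf_full_cycle f \<and> odd (num_neg_arcs f)"

end

theory Submission
  imports Defs
begin

text \<open>A network circular along a cyclic permutation \<open>\<rho>\<close> sets vertex \<open>\<rho> u\<close> to \<open>x u\<close> or to its
  negation. The number of vertices it moves has the parity of the number of negations, so an odd
  number leaves no fixed point, while with an even number every configuration fixed off one vertex
  is fixed, giving two fixed points. A strict subnetwork is an acyclic chain of such gates and has
  exactly one fixed point. Conversely, let \<open>f\<close> be non-expansive. If \<open>f\<close> is 2-critical, its two
  fixed points \<open>a\<close> and \<open>\<not> a\<close> are antipodal, so \<open>f\<close> preserves the distance to \<open>a\<close> and maps the
  flip of \<open>a\<close> at \<open>j\<close> to its flip at some \<open>succ j\<close>; one shows \<open>succ\<close> is a cyclic permutation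
  along which \<open>f\<close> is circular. If \<open>f\<close> is 0-critical, it has a periodic orbit of unit steps. The
  total distance to that orbit never increases under \<open>f\<close>, and 0-criticality forces every vertex to
  take both values equally often along it, which makes the total distance constant. Hence \<open>f\<close>
  moves every configuration rigidly along the orbit, and the vertex flipped at each step is a copy
  or a negation of the one flipped at the step before.\<close>

lemma hamming_eq_0_iff: "hamming x y = 0 \<longleftrightarrow> x = y"
  unfolding hamming_def by (auto simp: fun_eq_iff)

lemma hamming_fun_upd_Not:
  "hamming x (y(v := \<not> y v)) = (if x v = y v then Suc (hamming x y) else hamming x y - 1)"
proof (cases "x v = y v")
  case True
  then have "{u. x u \<noteq> (y(v := \<not> y v)) u} = insert v {u. x u \<noteq> y u}"
    and "v \<notin> {u. x u \<noteq> y u}" by auto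
  then show ?thesis using True unfolding hamming_def by simp
next
  case False
  then have "{u. x u \<noteq> (y(v := \<not> y v)) u} = {u. x u \<noteq> y u} - {v}"
    and "v \<in> {u. x u \<noteq> y u}" by auto
  then show ?thesis using False unfolding hamming_def by simp
qed

lemma hamming_le_1: "(\<And>u. u \<noteq> v \<Longrightarrow> x u = y u) \<Longrightarrow> hamming x y \<le> 1"
  unfolding hamming_def using card_mono[of "{v}" "{u. x u \<noteq> y u}"] by fastforce

lemma hamming_add_hamming_Not:
  fixes x a :: "('v::finite) config"
  shows "hamming x a + hamming x (\<lambda>v. \<not> a v) = card (UNIV :: 'v set)"
proof -
  have "{v. x v \<noteq> a v} \<union> {v. x v \<noteq> (\<not> a v)} = UNIV"
    and "{v. x v \<noteq> a v} \<inter> {v. x v \<noteq> (\<not> a v)} = {}" by auto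
  then show ?thesis unfolding hamming_def by (metis card_Un_disjoint finite)
qed

lemma hamming_comp_bij:
  fixes \<rho> :: "'v::finite \<Rightarrow> 'v"
  assumes "bij \<rho>"
  shows "hamming (x \<circ> \<rho>) (y \<circ> \<rho>) = hamming x y"
  using card_vimage_inj[of \<rho> "{v. x v \<noteq> y v}"] assms
  by (simp add: hamming_def bij_is_inj bij_is_surj vimage_def)

lemma even_card_neq_iff:
  fixes A B :: "'v::finite \<Rightarrow> bool"
  shows "even (card {v. A v \<noteq> B v}) \<longleftrightarrow> even (card {v. A v} + card {v. B v})"
proof -
  let ?A = "{v. A v}" and ?B = "{v. B v}"
  have "{v. A v \<noteq> B v} = (?A \<union> ?B) - (?A \<inter> ?B)" by auto
  moreover have "card ?A + card ?B = card (?A \<union> ?B) + card (?A \<inter> ?B)"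
    by (rule card_Un_Int) auto
  moreover have "card ((?A \<union> ?B) - (?A \<inter> ?B)) = card (?A \<union> ?B) - card (?A \<inter> ?B)"
    by (rule card_Diff_subset) auto
  moreover have "card (?A \<inter> ?B) \<le> card (?A \<union> ?B)" by (rule card_mono) auto
  ultimately show ?thesis by auto
qed

section \<open>Circular networks\<close>

definition circular_along :: "('v config \<Rightarrow> 'v config) \<Rightarrow> ('v \<Rightarrow> 'v) \<Rightarrow> bool" where
  "circular_along f \<rho> \<longleftrightarrow> bij \<rho> \<and> (\<forall>x u. f x (\<rho> u) = (x u \<noteq> f (\<lambda>_. False) (\<rho> u)))"

definition single_orbit :: "('v \<Rightarrow> 'v) \<Rightarrow> bool" where
  "single_orbit \<rho> \<longleftrightarrow> (\<exists>v0. \<forall>v. \<exists>t. (\<rho> ^^ t) v0 = v)"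

lemma circular_along_bij: "circular_along f \<rho> \<Longrightarrow> bij \<rho>"
  unfolding circular_along_def by blast

lemma circular_along_apply:
  "circular_along f \<rho> \<Longrightarrow> f x (\<rho> u) = (x u \<noteq> f (\<lambda>_. False) (\<rho> u))"
  unfolding circular_along_def by blast

lemma circular_along_non_expansive:
  assumes "circular_along f \<rho>"
  shows "non_expansive f"
  unfolding non_expansive_def
proof (intro allI)
  fix x y
  have "hamming (f x) (f y) = hamming (f x \<circ> \<rho>) (f y \<circ> \<rho>)"
    using hamming_comp_bij[OF circular_along_bij[OF assms]] by simp
  also have "\<dots> = hamming x y"
    unfolding hamming_def comp_def
    by (intro arg_cong[where f=card] Collect_cong)
      (auto simp: circular_along_apply[OF assms, of x] circular_along_apply[OF assms, of y])
  finally show "hamming (f x) (f y) \<le> hamming x y" by simp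
qed

text \<open>Summing \<open>x (\<rho> u) \<noteq> (x u \<noteq> c u)\<close> over \<open>u\<close> modulo 2, the terms \<open>x (\<rho> u)\<close> and \<open>x u\<close>
  cancel because \<open>\<rho>\<close> is a bijection.\<close>
lemma circular_along_even_hamming_iff:
  assumes "circular_along f \<rho>"
  shows "even (hamming x (f x)) \<longleftrightarrow> even (card {u. f (\<lambda>_. False) (\<rho> u)})"
proof -
  let ?c = "\<lambda>u. f (\<lambda>_. False) (\<rho> u)"
  have b: "bij \<rho>" using circular_along_bij[OF assms] .
  have "hamming x (f x) = hamming (x \<circ> \<rho>) (f x \<circ> \<rho>)"
    using hamming_comp_bij[OF b] by simp
  also have "\<dots> = card {u. x (\<rho> u) \<noteq> (x u \<noteq> ?c u)}"
    unfolding hamming_def comp_def by (simp only: circular_along_apply[OF assms, of x])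
  finally have h: "hamming x (f x) = card {u. x (\<rho> u) \<noteq> (x u \<noteq> ?c u)}" .
  have r: "card {u. x (\<rho> u)} = card {u. x u}"
    using card_vimage_inj[of \<rho> "{u. x u}"] b by (simp add: bij_is_inj bij_is_surj vimage_def)
  show ?thesis
    unfolding h even_card_neq_iff r using even_card_neq_iff[of x ?c] by auto
qed

lemma circular_along_odd_fixpoints:
  fixes f :: "('v::finite) config \<Rightarrow> 'v config"
  assumes "circular_along f \<rho>" and "odd (card {u. f (\<lambda>_. False) (\<rho> u)})"
  shows "fixpoints f = {}"
proof -
  have "f x \<noteq> x" for x
    using circular_along_even_hamming_iff[OF assms(1), of x] assms(2) hamming_eq_0_iff[of x "f x"]
    by auto
  then show ?thesis by (simp add: fixpoints_def)
qed

section \<open>Fixed points of subnetworks\<close>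

definition fixed_on :: "('v config \<Rightarrow> 'v config) \<Rightarrow> 'v set \<Rightarrow> 'v config \<Rightarrow> bool" where
  "fixed_on f I w \<longleftrightarrow> (\<forall>v\<in>I. f w v = w v)"

lemma glue_sub_fixpoint:
  assumes "x \<in> sub_fixpoints f I z"
  shows "fixed_on f I (glue I x z)" and "\<forall>v. v \<notin> I \<longrightarrow> glue I x z v = z v"
proof -
  have "subnet f I z x v = x v" for v using assms by (simp add: sub_fixpoints_def)
  then show "fixed_on f I (glue I x z)"
    unfolding fixed_on_def subnet_def by (metis glue_def)
qed (simp add: glue_def)

lemma restrict_fixed_on_sub_fixpoint:
  assumes "fixed_on f I w" and "\<forall>v. v \<notin> I \<longrightarrow> w v = z v"
  shows "(\<lambda>v. v \<in> I \<and> w v) \<in> sub_fixpoints f I z"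
proof -
  have "glue I (\<lambda>v. v \<in> I \<and> w v) z = w" using assms(2) by (auto simp: glue_def)
  then have "subnet f I z (\<lambda>v. v \<in> I \<and> w v) = (\<lambda>v. v \<in> I \<and> w v)"
    using assms(1) unfolding subnet_def fixed_on_def by auto
  then show ?thesis by (simp add: sub_fixpoints_def confs_on_def)
qed

lemma sub_fixpoints_nonempty_iff:
  "sub_fixpoints f I z \<noteq> {} \<longleftrightarrow> (\<exists>w. fixed_on f I w \<and> (\<forall>v. v \<notin> I \<longrightarrow> w v = z v))"
proof
  assume "sub_fixpoints f I z \<noteq> {}"
  then obtain x where "x \<in> sub_fixpoints f I z" by blast
  from glue_sub_fixpoint[OF this] show "\<exists>w. fixed_on f I w \<and> (\<forall>v. v \<notin> I \<longrightarrow> w v = z v)"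
    by blast
next
  assume "\<exists>w. fixed_on f I w \<and> (\<forall>v. v \<notin> I \<longrightarrow> w v = z v)"
  then show "sub_fixpoints f I z \<noteq> {}" using restrict_fixed_on_sub_fixpoint by blast
qed

lemma card_sub_fixpoints_le_1_iff:
  fixes f :: "('v::finite) config \<Rightarrow> 'v config"
  shows "card (sub_fixpoints f I z) \<le> 1 \<longleftrightarrow>
    (\<forall>w w'. fixed_on f I w \<longrightarrow> fixed_on f I w' \<longrightarrow> (\<forall>v. v \<notin> I \<longrightarrow> w v = z v \<and> w' v = z v)
       \<longrightarrow> w = w')"
  (is "?le_1 \<longleftrightarrow> ?unique")
proof -
  have "?le_1 \<longleftrightarrow> (\<forall>x\<in>sub_fixpoints f I z. \<forall>y\<in>sub_fixpoints f I z. x = y)"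
    using card_le_Suc0_iff_eq[OF finite] by simp
  also have "\<dots> \<longleftrightarrow> ?unique"
  proof
    assume eq: "\<forall>x\<in>sub_fixpoints f I z. \<forall>y\<in>sub_fixpoints f I z. x = y"
    show ?unique
    proof (intro allI impI)
      fix w w'
      assume "fixed_on f I w" "fixed_on f I w'" and agree: "\<forall>v. v \<notin> I \<longrightarrow> w v = z v \<and> w' v = z v"
      then have restr: "(\<lambda>v. v \<in> I \<and> w v) = (\<lambda>v. v \<in> I \<and> w' v)"
        using eq restrict_fixed_on_sub_fixpoint[of f I _ z] by blast
      show "w = w'"
      proof
        fix v show "w v = w' v" using fun_cong[OF restr, of v] agree by (cases "v \<in> I") auto
      qed
    qed
  next
    assume unique: ?unique
    show "\<forall>x\<in>sub_fixpoints f I z. \<forall>y\<in>sub_fixpoints f I z. x = y"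
    proof (intro ballI)
      fix x y assume x: "x \<in> sub_fixpoints f I z" and y: "y \<in> sub_fixpoints f I z"
      have glued: "glue I x z = glue I y z"
        using unique glue_sub_fixpoint[OF x] glue_sub_fixpoint[OF y] by blast
      have outside: "\<forall>v. v \<notin> I \<longrightarrow> x v = y v"
        using x y by (simp add: sub_fixpoints_def confs_on_def)
      show "x = y"
      proof
        fix v show "x v = y v"
          using fun_cong[OF glued, of v] outside by (cases "v \<in> I") (auto simp: glue_def)
      qed
    qed
  qed
  finally show ?thesis .
qed

section \<open>Circular networks along a single cycle are critical\<close>

lemma single_orbit_vimage_subset:
  fixes \<rho> :: "'v::finite \<Rightarrow> 'v"
  assumes "bij \<rho>" and "single_orbit \<rho>" and "\<rho> -` D \<subseteq> D"
  shows "D = {} \<or> D = UNIV"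
proof -
  have "card (\<rho> -` D) = card D"
    using assms(1) by (simp add: bij_is_inj bij_is_surj card_vimage_inj)
  then have closed: "\<rho> -` D = D" using assms(3) by (simp add: card_subset_eq)
  obtain v0 where v0: "\<forall>v. \<exists>t. (\<rho> ^^ t) v0 = v" using assms(2) unfolding single_orbit_def by blast
  have "(\<rho> ^^ t) v0 \<in> D \<longleftrightarrow> v0 \<in> D" for t
  proof (induction t)
    case (Suc t)
    have "(\<rho> ^^ Suc t) v0 \<in> D \<longleftrightarrow> (\<rho> ^^ t) v0 \<in> \<rho> -` D" by simp
    then show ?case using Suc.IH closed by simp
  qed simp
  then show ?thesis using v0 by (metis UNIV_eq_I empty_iff equals0I)
qed

text \<open>The strict subnetwork on \<open>I\<close> is acyclic: some gate \<open>\<rho> u \<in> I\<close> reads a frozen input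
  \<open>u \<notin> I\<close>, so its value is forced and it can be frozen in turn.\<close>
lemma circular_along_fixed_on_exists:
  fixes f :: "('v::finite) config \<Rightarrow> 'v config"
  assumes circ: "circular_along f \<rho>" and orbit: "single_orbit \<rho>" and "I \<noteq> UNIV"
  shows "\<exists>w. fixed_on f I w \<and> (\<forall>v. v \<notin> I \<longrightarrow> w v = z v)"
  using \<open>I \<noteq> UNIV\<close>
proof (induction "card I" arbitrary: I z)
  case 0
  then show ?case by (auto simp: fixed_on_def)
next
  case (Suc m)
  have "I \<noteq> {}" using Suc.hyps(2) by auto
  then have "\<not> \<rho> -` I \<subseteq> I"
    using single_orbit_vimage_subset[OF circular_along_bij[OF circ] orbit, of I] Suc.prems by blast
  then obtain u where "\<rho> u \<in> I" and "u \<notin> I" by blast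
  define v where "v = \<rho> u"
  have "m = card (I - {v})" and "I - {v} \<noteq> UNIV"
    using Suc.hyps(2) \<open>\<rho> u \<in> I\<close> unfolding v_def by auto
  then obtain w where fixed: "fixed_on f (I - {v}) w"
    and agree: "\<forall>v'. v' \<notin> I - {v} \<longrightarrow> w v' = (z(v := f z v)) v'"
    using Suc.hyps(1) by blast
  have "w u = z u" using agree \<open>u \<notin> I\<close> \<open>\<rho> u \<in> I\<close> v_def by auto
  then have "f w v = f z v"
    unfolding v_def circular_along_apply[OF circ, of w] circular_along_apply[OF circ, of z] by simp
  then have "fixed_on f I w" using fixed agree by (auto simp: fixed_on_def)
  moreover have "\<forall>v'. v' \<notin> I \<longrightarrow> w v' = z v'" using agree \<open>\<rho> u \<in> I\<close> v_def by auto
  ultimately show ?case by blast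
qed

lemma circular_along_fixed_on_unique:
  fixes f :: "('v::finite) config \<Rightarrow> 'v config"
  assumes circ: "circular_along f \<rho>" and orbit: "single_orbit \<rho>" and "I \<noteq> UNIV"
    and "fixed_on f I w" and "fixed_on f I w'" and agree: "\<forall>v. v \<notin> I \<longrightarrow> w v = w' v"
  shows "w = w'"
proof -
  define D where "D = {v. w v \<noteq> w' v}"
  have "\<rho> -` D \<subseteq> D"
  proof
    fix u assume "u \<in> \<rho> -` D"
    then have "\<rho> u \<in> I" and "w (\<rho> u) \<noteq> w' (\<rho> u)" using agree D_def by auto
    then have "f w (\<rho> u) \<noteq> f w' (\<rho> u)" using assms(4,5) by (simp add: fixed_on_def)
    then show "u \<in> D"
      unfolding D_def circular_along_apply[OF circ, of w] circular_along_apply[OF circ, of w'] by auto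
  qed
  then have "D = {} \<or> D = UNIV"
    by (rule single_orbit_vimage_subset[OF circular_along_bij[OF circ] orbit])
  moreover have "D \<noteq> UNIV" using \<open>I \<noteq> UNIV\<close> agree D_def by auto
  ultimately show ?thesis unfolding D_def by auto
qed

lemma circular_along_even_fixpoints:
  fixes f :: "('v::finite) config \<Rightarrow> 'v config"
  assumes circ: "circular_along f \<rho>" and orbit: "single_orbit \<rho>"
    and even: "even (card {u. f (\<lambda>_. False) (\<rho> u)})"
  shows "2 \<le> card (fixpoints f)"
proof -
  obtain v0 :: 'v where True by simp
  have "\<exists>w. f w = w \<and> w v0 = b" for b
  proof -
    obtain w where fixed: "fixed_on f (- {v0}) w" and "w v0 = b"
      using circular_along_fixed_on_exists[OF circ orbit, of "- {v0}" "\<lambda>_. b"] by auto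
    have "hamming w (f w) \<le> 1" using fixed by (intro hamming_le_1[of v0]) (simp add: fixed_on_def)
    moreover have "even (hamming w (f w))" using circular_along_even_hamming_iff[OF circ] even by blast
    ultimately have "f w = w" using hamming_eq_0_iff[of w "f w"] by (auto simp: le_Suc_eq)
    with \<open>w v0 = b\<close> show ?thesis by blast
  qed
  then obtain w1 w2 where "f w1 = w1" "w1 v0" "f w2 = w2" "\<not> w2 v0" by metis
  then have "{w1, w2} \<subseteq> fixpoints f" and "w1 \<noteq> w2" by (auto simp: fixpoints_def)
  then have "{w1, w2} \<subseteq> fixpoints f" and "card {w1, w2} = 2" by auto
  then show ?thesis by (metis card_mono finite)
qed

lemma circular_along_two_critical:
  fixes f :: "('v::finite) config \<Rightarrow> 'v config"
  assumes "circular_along f \<rho>" and "single_orbit \<rho>"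
    and "even (card {u. f (\<lambda>_. False) (\<rho> u)})"
  shows "two_critical f"
proof -
  have "card (sub_fixpoints f I z) \<le> 1" if "I \<noteq> UNIV" for I z
    unfolding card_sub_fixpoints_le_1_iff
    using circular_along_fixed_on_unique[OF assms(1,2) that] by auto
  then show ?thesis
    unfolding two_critical_def using circular_along_even_fixpoints[OF assms] by blast
qed

lemma circular_along_zero_critical:
  fixes f :: "('v::finite) config \<Rightarrow> 'v config"
  assumes "circular_along f \<rho>" and "single_orbit \<rho>"
    and "odd (card {u. f (\<lambda>_. False) (\<rho> u)})"
  shows "zero_critical f"
  unfolding zero_critical_def sub_fixpoints_nonempty_iff
  using circular_along_odd_fixpoints[OF assms(1,3)] circular_along_fixed_on_exists[OF assms(1,2)]
  by blast

section \<open>The interaction graph of a circular network\<close>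

lemma circular_along_arc_iff:
  fixes f :: "('v::finite) config \<Rightarrow> 'v config"
  assumes circ: "circular_along f \<rho>"
  shows "pos_arc f j i \<longleftrightarrow> i = \<rho> j \<and> \<not> f (\<lambda>_. False) (\<rho> j)"
    and "neg_arc f j i \<longleftrightarrow> i = \<rho> j \<and> f (\<lambda>_. False) (\<rho> j)"
proof -
  have b: "bij \<rho>" using circular_along_bij[OF circ] .
  define u where "u = inv \<rho> i"
  define c where "c = f (\<lambda>_. False) i"
  have i: "i = \<rho> u" using b by (simp add: u_def bij_is_surj surj_f_inv_f)
  have fi: "f y i = (y u \<noteq> c)" for y
    unfolding c_def i by (rule circular_along_apply[OF circ])
  have ju: "i = \<rho> j \<longleftrightarrow> j = u" using b i by (metis bij_inv_eq_iff u_def)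
  have "pos_arc f j i \<longleftrightarrow> j = u \<and> \<not> c"
    unfolding pos_arc_def fi by (cases "j = u") auto
  moreover have "neg_arc f j i \<longleftrightarrow> j = u \<and> c"
    unfolding neg_arc_def fi by (cases "j = u") auto
  ultimately
  show "pos_arc f j i \<longleftrightarrow> i = \<rho> j \<and> \<not> f (\<lambda>_. False) (\<rho> j)"
    and "neg_arc f j i \<longleftrightarrow> i = \<rho> j \<and> f (\<lambda>_. False) (\<rho> j)"
    using ju i c_def by auto
qed

lemma circular_along_arcs:
  fixes f :: "('v::finite) config \<Rightarrow> 'v config"
  assumes "circular_along f \<rho>"
  shows "arcs f = range (\<lambda>j. (j, \<rho> j))"
  using circular_along_arc_iff[OF assms] by (auto simp: arcs_def)

lemma circular_along_num_neg_arcs: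
  fixes f :: "('v::finite) config \<Rightarrow> 'v config"
  assumes "circular_along f \<rho>"
  shows "num_neg_arcs f = card {u. f (\<lambda>_. False) (\<rho> u)}"
proof -
  have "{(j, i). neg_arc f j i} = (\<lambda>j. (j, \<rho> j)) ` {u. f (\<lambda>_. False) (\<rho> u)}"
    using circular_along_arc_iff(2)[OF assms] by auto
  moreover have "inj (\<lambda>j. (j, \<rho> j))" by (simp add: inj_def)
  ultimately show ?thesis
    unfolding num_neg_arcs_def by (simp add: card_image inj_on_subset)
qed

lemma funpow_mem_image_period:
  assumes "(g ^^ q) v0 = v0" and "q > 0"
  shows "(g ^^ t) v0 \<in> (\<lambda>k. (g ^^ k) v0) ` {..<q}"
proof (induction t rule: less_induct)
  case (less t)
  show ?case
  proof (cases "t < q")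
    case False
    then have "(g ^^ t) v0 = (g ^^ (t - q)) ((g ^^ q) v0)"
      by (metis comp_apply funpow_add le_add_diff_inverse2 not_less)
    then show ?thesis using less.IH[of "t - q"] assms False by simp
  qed auto
qed

lemma bij_funpow_return:
  assumes "bij \<rho>" and "(\<rho> ^^ a) v0 = (\<rho> ^^ c) v0" and "a < c"
  shows "(\<rho> ^^ (c - a)) v0 = v0"
proof -
  have "c = a + (c - a)" using assms(3) by simp
  then have "(\<rho> ^^ a) ((\<rho> ^^ (c - a)) v0) = (\<rho> ^^ a) v0"
    using assms(2) by (metis comp_apply funpow_add)
  then show ?thesis using assms(1) by (simp add: bij_is_inj inj_fn inj_eq)
qed

lemma orbit_period_ge_card:
  fixes \<rho> :: "'v::finite \<Rightarrow> 'v"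
  assumes "\<forall>v. \<exists>t. (\<rho> ^^ t) v0 = v" and "(\<rho> ^^ q) v0 = v0" and "q > 0"
  shows "card (UNIV :: 'v set) \<le> q"
proof -
  have "UNIV \<subseteq> (\<lambda>k. (\<rho> ^^ k) v0) ` {..<q}"
  proof
    fix v obtain t where "(\<rho> ^^ t) v0 = v" using assms(1) by blast
    then show "v \<in> (\<lambda>k. (\<rho> ^^ k) v0) ` {..<q}" using funpow_mem_image_period[OF assms(2,3)] by blast
  qed
  then have "card (UNIV :: 'v set) \<le> card ((\<lambda>k. (\<rho> ^^ k) v0) ` {..<q})" by (intro card_mono) simp_all
  also have "\<dots> \<le> q" using card_image_le[of "{..<q}"] by simp
  finally show ?thesis .
qed

lemma single_orbit_enumeration:
  fixes \<rho> :: "'v::finite \<Rightarrow> 'v"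
  assumes b: "bij \<rho>" and v0: "\<forall>v. \<exists>t. (\<rho> ^^ t) v0 = v"
  defines "n \<equiv> card (UNIV :: 'v set)"
  shows "bij_betw (\<lambda>k. (\<rho> ^^ k) v0) {..<n} UNIV" and "(\<rho> ^^ n) v0 = v0"
proof -
  let ?s = "\<lambda>k. (\<rho> ^^ k) v0"
  have less: "\<not> (a < c \<and> c < n \<and> ?s a = ?s c)" for a c
  proof
    assume "a < c \<and> c < n \<and> ?s a = ?s c"
    then have "?s (c - a) = v0" and "0 < c - a" and "c - a < n"
      using bij_funpow_return[OF b, of a v0 c] by auto
    then show False using orbit_period_ge_card[OF v0] unfolding n_def by fastforce
  qed
  have inj: "inj_on ?s {..<n}"
  proof (rule inj_onI)
    fix a c assume "a \<in> {..<n}" "c \<in> {..<n}" "?s a = ?s c"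
    then show "a = c" using less[of a c] less[of c a] by (cases a c rule: linorder_cases) auto
  qed
  then have "card (?s ` {..<n}) = n" by (simp add: card_image)
  then have surj: "?s ` {..<n} = UNIV"
    unfolding n_def by (intro card_subset_eq) simp_all
  with inj show "bij_betw ?s {..<n} UNIV" by (simp add: bij_betw_def)
  have "?s n \<in> ?s ` {..<n}" using surj by simp
  then obtain k where k: "k < n" "?s n = ?s k" by auto
  have "k = 0"
  proof (rule ccontr)
    assume "k \<noteq> 0"
    then have "?s (n - k) = v0" and "0 < n - k" and "n - k < n"
      using bij_funpow_return[OF b k(2)[symmetric] k(1)] k(1) by auto
    then show False using less[of 0 "n - k"] by simp
  qed
  then show "?s n = v0" using k by simp
qed

lemma hamiltonian_cycle_successor_graph:
  fixes \<rho> :: "'v::finite \<Rightarrow> 'v"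
  assumes "bij \<rho>" and "single_orbit \<rho>"
  shows "hamiltonian_cycle (range (\<lambda>j. (j, \<rho> j)))"
proof -
  define n where "n = card (UNIV :: 'v set)"
  obtain v0 where v0: "\<forall>v. \<exists>t. (\<rho> ^^ t) v0 = v" using assms(2) unfolding single_orbit_def by blast
  define s where "s k = (\<rho> ^^ k) v0" for k
  have s: "bij_betw s {..<n} UNIV" "s n = v0"
    using single_orbit_enumeration[OF assms(1) v0] unfolding n_def s_def by auto
  have step: "s (Suc k mod n) = \<rho> (s k)" if "k < n" for k
  proof (cases "Suc k < n")
    case False
    then have "Suc k = n" using that by simp
    then show ?thesis using s(2) by (auto simp: s_def)
  qed (simp add: s_def)
  have "range (\<lambda>j. (j, \<rho> j)) = {(s k, s (Suc k mod n)) | k. k < n}"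
  proof safe
    fix j
    obtain k where "k < n" "s k = j" using s(1) by (metis bij_betw_iff_bijections UNIV_I lessThan_iff)
    then show "\<exists>k. (j, \<rho> j) = (s k, s (Suc k mod n)) \<and> k < n" using step by auto
  qed (use step in auto)
  then show ?thesis unfolding hamiltonian_cycle_def n_def[symmetric] using s(1) by blast
qed

lemma Suc_mod_inj:
  fixes a c n :: nat
  assumes "Suc a mod n = Suc c mod n" and "a < n" and "c < n"
  shows "a = c"
proof -
  have "Suc k mod n = (if Suc k = n then 0 else Suc k)" if "k < n" for k
    using that by auto
  then show ?thesis using assms by (auto split: if_splits)
qed

lemma hamiltonian_cycle_imp_successor_graph:
  fixes E :: "('v::finite \<times> 'v) set"
  assumes "hamiltonian_cycle E"
  shows "\<exists>\<rho>. bij \<rho> \<and> single_orbit \<rho> \<and> E = range (\<lambda>j. (j, \<rho> j))"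
proof -
  define n where "n = card (UNIV :: 'v set)"
  obtain \<sigma> :: "nat \<Rightarrow> 'v" where \<sigma>: "bij_betw \<sigma> {..<n} UNIV"
    and E: "E = {(\<sigma> k, \<sigma> (Suc k mod n)) | k. k < n}"
    using assms unfolding hamiltonian_cycle_def n_def by blast
  have "n > 0" unfolding n_def by (simp add: finite_UNIV_card_ge_0)
  define idx where "idx = inv_into {..<n} \<sigma>"
  have idx: "idx v < n" "\<sigma> (idx v) = v" for v
    using \<sigma> inv_into_into[of v \<sigma> "{..<n}"] unfolding idx_def
    by (auto simp: bij_betw_def f_inv_into_f)
  have idx_\<sigma>: "idx (\<sigma> k) = k" if "k < n" for k
    using \<sigma> that unfolding idx_def by (simp add: bij_betw_inv_into_left)
  define \<rho> where "\<rho> v = \<sigma> (Suc (idx v) mod n)" for v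
  have \<rho>_\<sigma>: "\<rho> (\<sigma> k) = \<sigma> (Suc k mod n)" if "k < n" for k
    using that by (simp add: \<rho>_def idx_\<sigma>)
  have "inj \<rho>"
  proof (rule injI)
    fix a c assume "\<rho> a = \<rho> c"
    then have "Suc (idx a) mod n = Suc (idx c) mod n"
      using \<sigma> \<open>n > 0\<close> unfolding \<rho>_def bij_betw_def by (auto dest: inj_onD)
    then have "idx a = idx c" using idx(1)[of a] idx(1)[of c] by (rule Suc_mod_inj)
    then show "a = c" using idx(2) by metis
  qed
  then have "bij \<rho>" by (simp add: bij_def finite_UNIV_inj_surj)
  have "(\<rho> ^^ k) (\<sigma> 0) = \<sigma> (k mod n)" for k
  proof (induction k)
    case (Suc k)
    then show ?case using \<rho>_\<sigma>[of "k mod n"] \<open>n > 0\<close> by (simp add: mod_Suc_eq)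
  qed simp
  then have "(\<rho> ^^ idx v) (\<sigma> 0) = v" for v using idx[of v] by simp
  then have "single_orbit \<rho>" unfolding single_orbit_def by blast
  have "E = (\<lambda>j. (j, \<rho> j)) ` \<sigma> ` {..<n}"
    unfolding E using \<rho>_\<sigma> by force
  also have "\<dots> = range (\<lambda>j. (j, \<rho> j))"
    using \<sigma> by (simp add: bij_betw_def)
  finally show ?thesis using \<open>bij \<rho>\<close> \<open>single_orbit \<rho>\<close> by blast
qed

lemma eq_if_insensitive_except:
  fixes h :: "('v::finite) config \<Rightarrow> 'b"
  assumes insensitive: "\<And>j x. j \<noteq> u \<Longrightarrow> h (x(j := True)) = h (x(j := False))"
    and "x u = y u"
  shows "h x = h y"
proof -
  have upd: "h (w(j := b)) = h w" if "j \<noteq> u" for w j b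
    using insensitive[OF that, of w] by (cases b; cases "w j") (auto simp: fun_upd_idem)
  have "h (override_on x y A) = h x" if "finite A" "u \<notin> A" for A
    using that
  proof (induction A rule: finite_induct)
    case (insert a A)
    have "h (override_on x y (insert a A)) = h (override_on x y A)"
      unfolding override_on_insert using insert.prems by (intro upd) auto
    then show ?case using insert by simp
  qed simp
  moreover have "override_on x y (- {u}) = y" using \<open>x u = y u\<close> by (auto simp: override_on_def)
  ultimately show ?thesis by (metis finite Compl_iff insertI1)
qed

lemma no_arc_iff:
  "\<not> pos_arc f j i \<and> \<not> neg_arc f j i \<longleftrightarrow> (\<forall>x. f (x(j := True)) i = f (x(j := False)) i)"
  unfolding pos_arc_def neg_arc_def by blast

lemma successor_arcs_imp_circular_along:
  fixes f :: "('v::finite) config \<Rightarrow> 'v config"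
  assumes "bij \<rho>" and arcs: "arcs f = range (\<lambda>j. (j, \<rho> j))"
  shows "circular_along f \<rho>"
  unfolding circular_along_def
proof (intro conjI allI assms(1))
  fix x u
  define g where "g b = f ((\<lambda>_. False)(u := b)) (\<rho> u)" for b
  have insensitive: "f (y(j := True)) (\<rho> u) = f (y(j := False)) (\<rho> u)" if "j \<noteq> u" for y j
  proof -
    have "(j, \<rho> u) \<notin> arcs f" using arcs that bij_is_inj[OF assms(1)] by (auto dest: injD)
    then show ?thesis using no_arc_iff[of f j "\<rho> u"] by (auto simp: arcs_def)
  qed
  have only_u: "f y (\<rho> u) = g (y u)" for y
    unfolding g_def by (rule eq_if_insensitive_except[of u "\<lambda>y. f y (\<rho> u)", OF insensitive]) simp_all
  have "(u, \<rho> u) \<in> arcs f" using arcs by auto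
  then have "pos_arc f u (\<rho> u) \<or> neg_arc f u (\<rho> u)" by (simp add: arcs_def)
  then have "g True \<noteq> g False" unfolding pos_arc_def neg_arc_def only_u by auto
  then show "f x (\<rho> u) = (x u \<noteq> f (\<lambda>_. False) (\<rho> u))"
    unfolding only_u by (cases "x u") auto
qed

lemma Gf_full_cycle_iff_circular_along:
  fixes f :: "('v::finite) config \<Rightarrow> 'v config"
  shows "Gf_full_cycle f \<longleftrightarrow> (\<exists>\<rho>. circular_along f \<rho> \<and> single_orbit \<rho>)"
proof
  assume "Gf_full_cycle f"
  then obtain \<rho> where "bij \<rho>" "single_orbit \<rho>" "arcs f = range (\<lambda>j. (j, \<rho> j))"
    using hamiltonian_cycle_imp_successor_graph unfolding Gf_full_cycle_def by blast
  then show "\<exists>\<rho>. circular_along f \<rho> \<and> single_orbit \<rho>"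
    using successor_arcs_imp_circular_along by blast
next
  assume "\<exists>\<rho>. circular_along f \<rho> \<and> single_orbit \<rho>"
  then obtain \<rho> where circ: "circular_along f \<rho>" and "single_orbit \<rho>" by blast
  then have "hamiltonian_cycle (arcs f)"
    unfolding circular_along_arcs[OF circ]
    by (intro hamiltonian_cycle_successor_graph circular_along_bij)
  moreover have "\<not> (pos_arc f j i \<and> neg_arc f j i)" for j i
    using circular_along_arc_iff[OF circ] by blast
  ultimately show "Gf_full_cycle f" unfolding Gf_full_cycle_def by blast
qed

section \<open>Non-expansive 2-critical networks are circular\<close>

lemma two_critical_fixed_on_unique:
  fixes f :: "('v::finite) config \<Rightarrow> 'v config"
  assumes "two_critical f" and "I \<noteq> {}" and "I \<noteq> UNIV"
    and "fixed_on f I w" and "fixed_on f I w'" and agree: "\<forall>v. v \<notin> I \<longrightarrow> w v = w' v"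
  shows "w = w'"
proof -
  define z where "z v = (v \<notin> I \<and> w v)" for v
  have "z \<in> confs_on (- I)" by (simp add: z_def confs_on_def)
  then have "card (sub_fixpoints f I z) \<le> 1"
    using assms(1-3) unfolding two_critical_def by blast
  then show ?thesis
    unfolding card_sub_fixpoints_le_1_iff using assms(4,5) agree by (auto simp: z_def)
qed

lemma two_critical_fixpoints_complementary:
  fixes f :: "('v::finite) config \<Rightarrow> 'v config"
  assumes "two_critical f" and "f x = x" and "f y = y" and "x \<noteq> y"
  shows "y = (\<lambda>v. \<not> x v)"
proof -
  define K where "K = {v. x v \<noteq> y v}"
  have "K \<noteq> {}" using assms(4) by (auto simp: K_def fun_eq_iff)
  moreover have "fixed_on f K x" "fixed_on f K y" using assms(2,3) by (simp_all add: fixed_on_def)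
  moreover have "\<forall>v. v \<notin> K \<longrightarrow> x v = y v" by (simp add: K_def)
  ultimately have "K = UNIV"
    using two_critical_fixed_on_unique[OF assms(1)] assms(4) by blast
  then show ?thesis by (auto simp: K_def)
qed

text \<open>With two antipodal fixed points, non-expansiveness towards each of them forces
  equality, since the two distances always add up to the number of vertices.\<close>
lemma non_expansive_antipodal_fixpoints_hamming:
  fixes f :: "('v::finite) config \<Rightarrow> 'v config"
  assumes "non_expansive f" and "f a = a" and "f (\<lambda>v. \<not> a v) = (\<lambda>v. \<not> a v)"
  shows "hamming (f x) a = hamming x a"
proof -
  have "hamming (f x) a \<le> hamming x a" "hamming (f x) (\<lambda>v. \<not> a v) \<le> hamming x (\<lambda>v. \<not> a v)"
    using assms unfolding non_expansive_def by metis+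
  then show ?thesis using hamming_add_hamming_Not[of "f x" a] hamming_add_hamming_Not[of x a] by linarith
qed

locale antipodal_isometry =
  fixes f :: "('v::finite) config \<Rightarrow> 'v config" and a :: "'v config"
  assumes non_expansive: "non_expansive f"
    and hamming_a: "\<And>x. hamming (f x) a = hamming x a"
    and fixpoints: "\<And>x. f x = x \<Longrightarrow> x = a \<or> x = (\<lambda>v. \<not> a v)"
begin

definition disagree :: "'v config \<Rightarrow> 'v set" where
  "disagree x = {v. x v \<noteq> a v}"

lemma disagree_inj:
  assumes "disagree x = disagree y"
  shows "x = y"
proof
  fix v
  have "(x v \<noteq> a v) = (y v \<noteq> a v)" using assms unfolding disagree_def by blast
  then show "x v = y v" by blast
qed

lemma card_disagree_f: "card (disagree (f x)) = card (disagree x)"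
  using hamming_a[of x] by (simp add: hamming_def disagree_def)

lemma disagree_flip: "disagree (a(j := \<not> a j)) = {j}"
  by (auto simp: disagree_def)

definition succ :: "'v \<Rightarrow> 'v" where
  "succ j = (SOME k. disagree (f (a(j := \<not> a j))) = {k})"

lemma disagree_f_flip: "disagree (f (a(j := \<not> a j))) = {succ j}"
proof -
  have "card (disagree (f (a(j := \<not> a j)))) = 1" using card_disagree_f disagree_flip by simp
  then have "\<exists>k. disagree (f (a(j := \<not> a j))) = {k}" by (meson card_1_singletonE)
  then show ?thesis unfolding succ_def by (rule someI_ex)
qed

lemma f_flip: "f (a(j := \<not> a j)) = a(succ j := \<not> a (succ j))"
  using disagree_f_flip disagree_flip by (intro disagree_inj) simp

lemma succ_mem_disagree_f:
  assumes "j \<in> disagree x"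
  shows "succ j \<in> disagree (f x)"
proof (rule ccontr)
  assume "succ j \<notin> disagree (f x)"
  then have "hamming (f x) (f (a(j := \<not> a j))) = Suc (hamming x a)"
    unfolding f_flip hamming_fun_upd_Not hamming_a by (simp add: disagree_def)
  moreover have "hamming x (a(j := \<not> a j)) < Suc (hamming x a)"
    unfolding hamming_fun_upd_Not using assms by (simp add: disagree_def)
  moreover have "hamming (f x) (f (a(j := \<not> a j))) \<le> hamming x (a(j := \<not> a j))"
    using non_expansive unfolding non_expansive_def by blast
  ultimately show False by simp
qed

lemma succ_image_disagree: "succ ` disagree x \<subseteq> disagree (f x)"
  using succ_mem_disagree_f by blast

text \<open>If \<open>succ\<close> is injective on \<open>Q\<close>, the configuration disagreeing with \<open>a\<close> exactly on \<open>Q\<close>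
  is fixed, so \<open>Q = UNIV\<close>; otherwise pass to the smaller closed set \<open>succ ` Q\<close>.\<close>
lemma succ_closed_eq_UNIV:
  assumes "Q \<noteq> {}" and "succ ` Q \<subseteq> Q"
  shows "Q = UNIV"
  using assms
proof (induction "card Q" arbitrary: Q rule: less_induct)
  case less
  show ?case
  proof (cases "card (succ ` Q) = card Q")
    case True
    define x where "x v = (if v \<in> Q then \<not> a v else a v)" for v
    have "disagree x = Q" by (auto simp: x_def disagree_def)
    then have "succ ` Q = disagree (f x)"
      using succ_image_disagree[of x] card_disagree_f[of x] True by (metis card_subset_eq finite)
    then have "disagree (f x) = disagree x"
      using \<open>disagree x = Q\<close> less.prems(2) True by (metis card_subset_eq finite)
    then have "x = a \<or> x = (\<lambda>v. \<not> a v)" by (intro fixpoints disagree_inj)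
    then show ?thesis
      using \<open>disagree x = Q\<close> less.prems(1) by (auto simp: disagree_def)
  next
    case False
    then have "card (succ ` Q) < card Q" using card_image_le[of Q succ] by simp
    moreover have "succ ` Q \<noteq> {}" "succ ` succ ` Q \<subseteq> succ ` Q" using less.prems by auto
    ultimately have "succ ` Q = UNIV" using less.hyps by blast
    then show ?thesis using less.prems(2) by auto
  qed
qed

lemma bij_succ: "bij succ"
proof -
  have "range succ = UNIV" by (rule succ_closed_eq_UNIV) auto
  then show ?thesis by (simp add: bij_def finite_UNIV_surj_inj)
qed

lemma single_orbit_succ: "single_orbit succ"
proof -
  obtain j0 :: 'v where True by simp
  let ?orbit = "range (\<lambda>t. (succ ^^ t) j0)"
  have "succ ` ?orbit \<subseteq> ?orbit"
  proof
    fix v assume "v \<in> succ ` ?orbit"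
    then obtain t where "v = (succ ^^ Suc t) j0" by auto
    then show "v \<in> ?orbit" by blast
  qed
  then have "?orbit = UNIV" by (intro succ_closed_eq_UNIV) simp_all
  then have "\<forall>v. \<exists>t. (succ ^^ t) j0 = v" by (metis rangeE UNIV_I)
  then show ?thesis unfolding single_orbit_def by blast
qed

lemma circular_along_succ: "circular_along f succ"
proof -
  have "card (succ ` disagree x) = card (disagree x)" for x
    using bij_is_inj[OF bij_succ] by (metis card_image inj_on_subset subset_UNIV)
  then have "disagree (f x) = succ ` disagree x" for x
    using succ_image_disagree[of x] card_disagree_f[of x] by (metis card_subset_eq finite)
  then have "succ u \<in> disagree (f x) \<longleftrightarrow> u \<in> disagree x" for x u
    using bij_succ by (simp add: bij_is_inj inj_image_mem_iff)
  then have flips: "f x (succ u) \<noteq> a (succ u) \<longleftrightarrow> x u \<noteq> a u" for x u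
    by (simp add: disagree_def)
  have "f x (succ u) = (x u \<noteq> f (\<lambda>_. False) (succ u))" for x u
    using flips[of x u] flips[of "\<lambda>_. False" u] by blast
  then show ?thesis unfolding circular_along_def using bij_succ by blast
qed

end

lemma two_critical_imp_circular_along:
  fixes f :: "('v::finite) config \<Rightarrow> 'v config"
  assumes "two_critical f" and "non_expansive f"
  shows "\<exists>\<rho>. circular_along f \<rho> \<and> single_orbit \<rho>"
proof -
  have "2 \<le> card (fixpoints f)" using assms(1) by (simp add: two_critical_def)
  then obtain a b where "a \<in> fixpoints f" "b \<in> fixpoints f" "a \<noteq> b"
    using card_le_Suc0_iff_eq[OF finite, of "fixpoints f"] by auto
  then have "f a = a" "f b = b" "a \<noteq> b" by (simp_all add: fixpoints_def)
  then have "f (\<lambda>v. \<not> a v) = (\<lambda>v. \<not> a v)"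
    using two_critical_fixpoints_complementary[OF assms(1)] by metis
  then interpret antipodal_isometry f a
    using assms \<open>f a = a\<close> two_critical_fixpoints_complementary[OF assms(1) \<open>f a = a\<close>]
    by unfold_locales (auto intro: non_expansive_antipodal_fixpoints_hamming)
  show ?thesis using circular_along_succ single_orbit_succ by blast
qed

section \<open>Non-expansive 0-critical networks are circular\<close>

lemma zero_critical_fixed_on_exists:
  fixes f :: "('v::finite) config \<Rightarrow> 'v config"
  assumes "zero_critical f" and "I \<noteq> UNIV"
  shows "\<exists>w. fixed_on f I w \<and> (\<forall>v. v \<notin> I \<longrightarrow> w v = z v)"
proof (cases "I = {}")
  case True
  then show ?thesis by (auto simp: fixed_on_def)
next
  case False
  define z' where "z' v = (v \<notin> I \<and> z v)" for v
  have "z' \<in> confs_on (- I)" by (simp add: z'_def confs_on_def)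
  then have "sub_fixpoints f I z' \<noteq> {}"
    using assms False unfolding zero_critical_def by blast
  then show ?thesis unfolding sub_fixpoints_nonempty_iff by (auto simp: z'_def)
qed

lemma zero_critical_no_fixpoint: "zero_critical f \<Longrightarrow> f x \<noteq> x"
  by (auto simp: zero_critical_def fixpoints_def)

lemma funpow_eventually_periodic:
  fixes g :: "'a::finite \<Rightarrow> 'a"
  shows "\<exists>s p. p > 0 \<and> (g ^^ (s + p)) y = (g ^^ s) y"
proof -
  have "\<not> inj (\<lambda>t. (g ^^ t) y)"
    using finite_imageD[of "\<lambda>t. (g ^^ t) y" UNIV] by auto
  then obtain s t where "(g ^^ s) y = (g ^^ t) y" "s < t"
    unfolding inj_def by (metis linorder_neqE_nat)
  then show ?thesis by (intro exI[of _ s] exI[of _ "t - s"]) simp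
qed

text \<open>A configuration fixed on all vertices but one is moved by exactly one step, and
  non-expansiveness without fixed points keeps every later step of length one.\<close>
lemma zero_critical_unit_cycle:
  fixes f :: "('v::finite) config \<Rightarrow> 'v config"
  assumes zc: "zero_critical f" and ne: "non_expansive f"
  shows "\<exists>c p. p > 0 \<and> (\<forall>k. c (Suc k) = f (c k)) \<and> (\<forall>k. c (k + p) = c k)
     \<and> (\<forall>k. hamming (c k) (c (Suc k)) = 1)"
proof -
  obtain v0 :: 'v where True by simp
  obtain y where "fixed_on f (- {v0}) y"
    using zero_critical_fixed_on_exists[OF zc, of "- {v0}"] by auto
  then have "hamming y (f y) \<le> 1" by (intro hamming_le_1[of v0]) (simp add: fixed_on_def)
  moreover have "hamming y (f y) \<noteq> 0" using zero_critical_no_fixpoint[OF zc] hamming_eq_0_iff by metis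
  ultimately have "hamming y (f y) = 1" by simp
  then have unit: "hamming ((f ^^ t) y) ((f ^^ Suc t) y) = 1" for t
  proof (induction t)
    case (Suc t)
    have "hamming ((f ^^ Suc t) y) ((f ^^ Suc (Suc t)) y) \<le> hamming ((f ^^ t) y) ((f ^^ Suc t) y)"
      using ne unfolding non_expansive_def by simp
    moreover have "hamming ((f ^^ Suc t) y) ((f ^^ Suc (Suc t)) y) \<noteq> 0"
      using zero_critical_no_fixpoint[OF zc] hamming_eq_0_iff by (metis funpow.simps(2) comp_apply)
    ultimately show ?case using Suc by simp
  qed simp
  obtain s p where "p > 0" and period: "(f ^^ (s + p)) y = (f ^^ s) y"
    using funpow_eventually_periodic by blast
  define c where "c k = (f ^^ (s + k)) y" for k
  have "c (k + p) = c k" for k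
  proof (induction k)
    case (Suc k)
    then show ?case by (simp add: c_def)
  qed (simp add: c_def period)
  moreover have "c (Suc k) = f (c k)" "hamming (c k) (c (Suc k)) = 1" for k
    using unit[of "s + k"] by (simp_all add: c_def)
  ultimately show ?thesis using \<open>p > 0\<close> by blast
qed

locale unit_cycle =
  fixes f :: "('v::finite) config \<Rightarrow> 'v config" and c :: "nat \<Rightarrow> 'v config" and p :: nat
  assumes zero_critical: "zero_critical f" and non_expansive: "non_expansive f"
    and period_pos: "p > 0"
    and c_Suc: "\<And>k. c (Suc k) = f (c k)" and c_period: "\<And>k. c (k + p) = c k"
    and c_unit: "\<And>k. hamming (c k) (c (Suc k)) = 1"
begin

lemma c_mod: "c k = c (k mod p)"
proof (induction k rule: less_induct)
  case (less k)
  show ?case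
  proof (cases "k < p")
    case False
    then have "c k = c (k - p)" using c_period[of "k - p"] by simp
    also have "\<dots> = c (k mod p)" using less.IH[of "k - p"] period_pos False by (simp add: le_mod_geq)
    finally show ?thesis .
  qed simp
qed

lemma hamming_f_c_Suc_le: "hamming (f x) (c (Suc t)) \<le> hamming x (c t)"
  using non_expansive unfolding non_expansive_def c_Suc by blast

definition total_dist :: "'v config \<Rightarrow> nat" where
  "total_dist x = (\<Sum>t<p. hamming x (c t))"

lemma total_dist_shift: "(\<Sum>t<p. hamming x (c (Suc t))) = total_dist x"
  unfolding total_dist_def
  using sum.lessThan_Suc[of "\<lambda>t. hamming x (c t)" p] sum.lessThan_Suc_shift[of "\<lambda>t. hamming x (c t)" p]
    c_period[of 0] by simp

lemma total_dist_f_le: "total_dist (f x) \<le> total_dist x"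
proof -
  have "total_dist (f x) = (\<Sum>t<p. hamming (f x) (c (Suc t)))" by (rule total_dist_shift[symmetric])
  also have "\<dots> \<le> (\<Sum>t<p. hamming x (c t))" by (intro sum_mono hamming_f_c_Suc_le)
  finally show ?thesis by (simp add: total_dist_def)
qed

definition misses :: "'v \<Rightarrow> bool \<Rightarrow> nat" where
  "misses v b = card {t\<in>{..<p}. c t v \<noteq> b}"

lemma total_dist_eq_sum_misses: "total_dist x = (\<Sum>v\<in>UNIV. misses v (x v))"
proof -
  have "total_dist x = (\<Sum>t<p. \<Sum>v\<in>UNIV. if x v \<noteq> c t v then 1 else 0)"
    unfolding total_dist_def hamming_def by (simp add: sum.If_cases Int_def)
  also have "\<dots> = (\<Sum>v\<in>UNIV. \<Sum>t<p. if c t v \<noteq> x v then 1 else 0)"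
    by (subst sum.swap) (auto intro!: sum.cong)
  also have "\<dots> = (\<Sum>v\<in>UNIV. misses v (x v))"
    unfolding misses_def by (simp add: sum.If_cases Int_def)
  finally show ?thesis .
qed

lemma misses_True_add_False: "misses v True + misses v False = p"
proof -
  have "{t\<in>{..<p}. c t v \<noteq> True} \<union> {t\<in>{..<p}. c t v \<noteq> False} = {..<p}"
    and "{t\<in>{..<p}. c t v \<noteq> True} \<inter> {t\<in>{..<p}. c t v \<noteq> False} = {}" by auto
  then show ?thesis
    unfolding misses_def using card_Un_disjoint[of "{t\<in>{..<p}. c t v \<noteq> True}" "{t\<in>{..<p}. c t v \<noteq> False}"]
    by simp
qed

text \<open>If some vertex were unbalanced, freeze every unbalanced vertex at its less missed value and
  let the others settle (0-criticality); the resulting point is not fixed, and \<open>f\<close> can only move it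
  at an unbalanced vertex, which strictly increases \<open>total_dist\<close>.\<close>
lemma misses_balanced: "misses v True = misses v False"
proof (rule ccontr)
  assume "misses v True \<noteq> misses v False"
  define U where "U = {v. misses v True \<noteq> misses v False}"
  define m where "m v = (misses v True < misses v False)" for v
  have m_less: "misses u (m u) < misses u b" if "u \<in> U" "b \<noteq> m u" for u b
    using that unfolding U_def m_def by (cases b) auto
  have "- U \<noteq> UNIV" using \<open>misses v True \<noteq> misses v False\<close> U_def by auto
  then obtain w where fixed: "fixed_on f (- U) w" and w_U: "\<forall>u. u \<in> U \<longrightarrow> w u = m u"
    using zero_critical_fixed_on_exists[OF zero_critical, of "- U" m] by auto
  obtain u where u: "f w u \<noteq> w u" using zero_critical_no_fixpoint[OF zero_critical, of w] by auto
  then have "u \<in> U" using fixed by (auto simp: fixed_on_def)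
  have "total_dist w < total_dist (f w)"
    unfolding total_dist_eq_sum_misses
  proof (rule sum_strict_mono_ex1)
    show "\<forall>x\<in>UNIV. misses x (w x) \<le> misses x (f w x)"
    proof
      fix x :: 'v
      show "misses x (w x) \<le> misses x (f w x)"
      proof (cases "x \<in> U \<and> f w x \<noteq> w x")
        case True
        then show ?thesis using m_less[of x "f w x"] w_U by simp
      qed (use fixed in \<open>auto simp: fixed_on_def\<close>)
    qed
    have "misses u (w u) < misses u (f w u)"
      using m_less[OF \<open>u \<in> U\<close>, of "f w u"] u w_U \<open>u \<in> U\<close> by simp
    then show "\<exists>x\<in>UNIV. misses x (w x) < misses x (f w x)" by blast
  qed simp
  then show False using total_dist_f_le[of w] by simp
qed

lemma total_dist_const: "total_dist x = total_dist y"
proof -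
  have "misses v (x v) = misses v (y v)" for v
    using misses_balanced[of v] by (cases "x v"; cases "y v") auto
  then show ?thesis unfolding total_dist_eq_sum_misses by simp
qed

text \<open>Since \<open>total_dist\<close> is constant, each of the inequalities summed in \<open>total_dist_f_le\<close> is an
  equality: \<open>f\<close> moves every configuration rigidly along the cycle.\<close>
lemma hamming_f_c_Suc: "hamming (f x) (c (Suc t)) = hamming x (c t)"
proof -
  have "hamming (f x) (c (Suc t)) = hamming x (c t)" if "t < p" for t
  proof (rule sum_mono_inv[where I="{..<p}" and f="\<lambda>t. hamming (f x) (c (Suc t))"])
    show "(\<Sum>t<p. hamming (f x) (c (Suc t))) = (\<Sum>t<p. hamming x (c t))"
      using total_dist_shift[of "f x"] total_dist_const[of "f x" x] unfolding total_dist_def by simp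
  qed (use that hamming_f_c_Suc_le in auto)
  moreover have "c (Suc t) = c (Suc (t mod p))" "c t = c (t mod p)"
    using c_mod[of "Suc t"] c_mod[of "Suc (t mod p)"] c_mod[of t] by (simp_all add: mod_Suc_eq)
  ultimately show ?thesis using period_pos by simp
qed

definition flip :: "nat \<Rightarrow> 'v" where
  "flip t = (SOME v. {u. c t u \<noteq> c (Suc t) u} = {v})"

lemma flip_unique: "{u. c t u \<noteq> c (Suc t) u} = {flip t}"
proof -
  have "card {u. c t u \<noteq> c (Suc t) u} = 1" using c_unit[of t] by (simp add: hamming_def)
  then have "\<exists>v. {u. c t u \<noteq> c (Suc t) u} = {v}" by (meson card_1_singletonE)
  then show ?thesis unfolding flip_def by (rule someI_ex)
qed

lemma c_Suc_flip: "c (Suc t) = (c t)(flip t := \<not> c t (flip t))"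
proof
  fix v
  have "c t v \<noteq> c (Suc t) v \<longleftrightarrow> v = flip t" using flip_unique by blast
  then show "c (Suc t) v = ((c t)(flip t := \<not> c t (flip t))) v" by (cases "v = flip t") auto
qed

text \<open>Comparing \<open>hamming (f x) (c (t + 2)) = hamming x (c (t + 1))\<close> with
  \<open>hamming (f x) (c (t + 1)) = hamming x (c t)\<close>: both sides change by one step of the cycle,
  so \<open>f x\<close> agrees with the cycle at \<open>flip (Suc t)\<close> iff \<open>x\<close> does at \<open>flip t\<close>.\<close>
lemma f_agrees_at_flip_Suc_iff:
  "f x (flip (Suc t)) = c (Suc t) (flip (Suc t)) \<longleftrightarrow> x (flip t) = c t (flip t)"
proof -
  define d where "d = hamming x (c t)"
  have "hamming (f x) (c (Suc (Suc t))) =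
      (if f x (flip (Suc t)) = c (Suc t) (flip (Suc t)) then Suc d else d - 1)"
    using hamming_f_c_Suc[of x t] unfolding d_def c_Suc_flip[of "Suc t"] hamming_fun_upd_Not by simp
  moreover have "hamming x (c (Suc t)) = (if x (flip t) = c t (flip t) then Suc d else d - 1)"
    unfolding d_def c_Suc_flip[of t] hamming_fun_upd_Not ..
  ultimately show ?thesis using hamming_f_c_Suc[of x "Suc t"] by (auto split: if_splits)
qed

lemma flip_surj: "\<exists>t. flip t = v"
proof -
  have "misses v True > 0" "misses v False > 0"
    using misses_True_add_False[of v] misses_balanced[of v] period_pos by auto
  then obtain t1 t2 where "\<not> c t1 v" "c t2 v" unfolding misses_def by fastforce
  have "\<exists>t. c t v \<noteq> c (Suc t) v"
  proof (rule ccontr)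
    assume "\<nexists>t. c t v \<noteq> c (Suc t) v"
    then have "c t v = c 0 v" for t by (induction t) auto
    then show False using \<open>\<not> c t1 v\<close> \<open>c t2 v\<close> by metis
  qed
  then obtain t where "v \<in> {u. c t u \<noteq> c (Suc t) u}" by blast
  then have "flip t = v" unfolding flip_unique by simp
  then show ?thesis ..
qed

text \<open>By \<open>f_agrees_at_flip_Suc_iff\<close>, \<open>f x (flip (Suc s))\<close> is a nonconstant function of
  \<open>x (flip s)\<close> alone, so it cannot also be a function of \<open>x (flip t)\<close> alone for another vertex.\<close>
lemma flip_Suc_eq_imp_eq:
  assumes "flip (Suc s) = flip (Suc t)"
  shows "flip s = flip t"
proof (rule ccontr)
  assume "flip s \<noteq> flip t"
  define x :: "'v config" where "x = (\<lambda>_. False)"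
  define x' where "x' = x(flip s := True)"
  have "x (flip t) = x' (flip t)" using \<open>flip s \<noteq> flip t\<close> by (simp add: x'_def)
  then have "f x (flip (Suc s)) = f x' (flip (Suc s))"
    using f_agrees_at_flip_Suc_iff[of x t] f_agrees_at_flip_Suc_iff[of x' t] assms by auto
  moreover have "x (flip s) \<noteq> x' (flip s)" by (simp add: x_def x'_def)
  ultimately show False
    using f_agrees_at_flip_Suc_iff[of x s] f_agrees_at_flip_Suc_iff[of x' s] by auto
qed

definition pred_flip :: "'v \<Rightarrow> 'v" where
  "pred_flip w = flip (SOME t. flip (Suc t) = w)"

lemma pred_flip_Suc: "pred_flip (flip (Suc t)) = flip t"
proof -
  have "flip (Suc (SOME t'. flip (Suc t') = flip (Suc t))) = flip (Suc t)"
    by (rule someI_ex) blast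
  then show ?thesis unfolding pred_flip_def by (rule flip_Suc_eq_imp_eq)
qed

lemma bij_pred_flip: "bij pred_flip"
proof -
  have "u \<in> range pred_flip" for u
  proof -
    obtain t where "flip t = u" using flip_surj by blast
    then show ?thesis using pred_flip_Suc[of t] by (metis rangeI)
  qed
  then have "surj pred_flip" by blast
  then show ?thesis by (simp add: bij_def finite_UNIV_surj_inj)
qed

lemma inv_pred_flip: "inv pred_flip (flip t) = flip (Suc t)"
  using bij_pred_flip pred_flip_Suc by (metis bij_inv_eq_iff)

lemma single_orbit_inv_pred_flip: "single_orbit (inv pred_flip)"
proof -
  have "(inv pred_flip ^^ t) (flip 0) = flip t" for t
    by (induction t) (simp_all add: inv_pred_flip)
  then show ?thesis unfolding single_orbit_def using flip_surj by metis
qed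

lemma circular_along_inv_pred_flip: "circular_along f (inv pred_flip)"
proof -
  have "f x (inv pred_flip u) = (x u \<noteq> f (\<lambda>_. False) (inv pred_flip u))" for x u
  proof -
    obtain t where "flip t = u" using flip_surj by blast
    then show ?thesis unfolding inv_pred_flip[of t, unfolded \<open>flip t = u\<close>]
      using f_agrees_at_flip_Suc_iff[of x t] f_agrees_at_flip_Suc_iff[of "\<lambda>_. False" t] by auto
  qed
  then show ?thesis unfolding circular_along_def using bij_imp_bij_inv[OF bij_pred_flip] by blast
qed

end

lemma zero_critical_imp_circular_along:
  fixes f :: "('v::finite) config \<Rightarrow> 'v config"
  assumes "zero_critical f" and "non_expansive f"
  shows "\<exists>\<rho>. circular_along f \<rho> \<and> single_orbit \<rho>"
proof -
  obtain c p where "p > 0" "\<forall>k. c (Suc k) = f (c k)" "\<forall>k. c (k + p) = c k"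
    "\<forall>k. hamming (c k) (c (Suc k)) = 1"
    using zero_critical_unit_cycle[OF assms] by blast
  then interpret unit_cycle f c p using assms by unfold_locales auto
  show ?thesis using circular_along_inv_pred_flip single_orbit_inv_pred_flip by blast
qed

lemma circular_along_two_critical_iff:
  fixes f :: "('v::finite) config \<Rightarrow> 'v config"
  assumes "circular_along f \<rho>" and "single_orbit \<rho>"
  shows "two_critical f \<longleftrightarrow> even (card {u. f (\<lambda>_. False) (\<rho> u)})"
proof
  assume "two_critical f"
  then have "fixpoints f \<noteq> {}" by (auto simp: two_critical_def)
  then show "even (card {u. f (\<lambda>_. False) (\<rho> u)})"
    using circular_along_odd_fixpoints[OF assms(1)] by blast
qed (rule circular_along_two_critical[OF assms])

lemma circular_along_zero_critical_iff:
  fixes f :: "('v::finite) config \<Rightarrow> 'v config"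
  assumes "circular_along f \<rho>" and "single_orbit \<rho>"
  shows "zero_critical f \<longleftrightarrow> odd (card {u. f (\<lambda>_. False) (\<rho> u)})"
  using circular_along_zero_critical[OF assms] circular_along_even_fixpoints[OF assms]
  by (auto simp: zero_critical_def)

theorem theorem10:
  fixes f :: "('v::finite) config \<Rightarrow> 'v config"
  shows "(positive_circular f \<longleftrightarrow> two_critical f \<and> non_expansive f)
       \<and> (negative_circular f \<longleftrightarrow> zero_critical f \<and> non_expansive f)"
proof -
  have "positive_circular f \<longleftrightarrow> (\<exists>\<rho>. circular_along f \<rho> \<and> single_orbit \<rho> \<and> two_critical f)"
    unfolding positive_circular_def Gf_full_cycle_iff_circular_along
    using circular_along_num_neg_arcs circular_along_two_critical_iff by metis
  also have "\<dots> \<longleftrightarrow> two_critical f \<and> non_expansive f"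
    using two_critical_imp_circular_along circular_along_non_expansive by blast
  finally have "positive_circular f \<longleftrightarrow> two_critical f \<and> non_expansive f" .
  moreover have "negative_circular f \<longleftrightarrow> (\<exists>\<rho>. circular_along f \<rho> \<and> single_orbit \<rho> \<and> zero_critical f)"
    unfolding negative_circular_def Gf_full_cycle_iff_circular_along
    using circular_along_num_neg_arcs circular_along_zero_critical_iff by metis
  moreover have "\<dots> \<longleftrightarrow> zero_critical f \<and> non_expansive f"
    using zero_critical_imp_circular_along circular_along_non_expansive by blast
  ultimately show ?thesis by blast
qed

end
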